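(* Let $q$ be a power of an odd prime $p$, let $a,b$ be distinct positive integers and $n$ a positive integer. The $\mathbb{F}_q$-dimension of the radical of the quadratic form $x\mapsto \mathrm{Tr}_{\mathbb{F}_{q^n}/\mathbb{F}_q}(x^{q^b+1}-x^{q^a+1})$ on $\mathbb{F}_{q^n}$ equals $$\begin{cases}(b+a,n)+(|b-a|,n)-(b+a,|b-a|,n) & \text{if } \nu_p(n)\le \max\{\nu_p(b+a),\nu_p(|b-a|)\},\\ (b+a,n)+(|b-a|,n) & \text{if } \nu_p(n)> \max\{\nu_p(b+a),\nu_p(|b-a|)\}.\end{cases}$$
   Context: $(u,v)$ and $(u,v,w)$ denote greatest common divisors; $\nu_p$ is the $p$-adic valuation. The radical of a quadratic form $F$ over $\mathbb{F}_q$ on $\mathbb{F}_{q^n}$ is $\{x\in\mathbb{F}_{q^n}: F(x+y)-F(x)-F(y)=0\ \forall y\in\mathbb{F}_{q^n}\}$. *)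

theory Defs
  imports "HOL-Algebra.Algebraic_Closure_Type" "HOL-Algebra.Embedded_Algebras"
    "HOL-Computational_Algebra.Primes"
begin

definition subfield_Fq :: "nat \<Rightarrow> 'a::field set" where
  "subfield_Fq q = {x. x ^ q = x}"

definition trace_Fq :: "nat \<Rightarrow> nat \<Rightarrow> 'a::field \<Rightarrow> 'a" where
  "trace_Fq q n x = (\<Sum>i<n. x ^ (q ^ i))"

definition qf_radical :: "('a::field \<Rightarrow> 'a) \<Rightarrow> 'a set" where
  "qf_radical F = {x. \<forall>y. F (x + y) - F x - F y = 0}"

end

theory Submission
  imports Defs
begin

text \<open>
  Write \<open>\<phi>\<close> for the Frobenius \<open>x \<mapsto> x^q\<close>, \<open>s = b + a\<close> and \<open>d = |b - a|\<close>. The polar form of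
  the quadratic form is \<open>Tr(y L(x))\<close> with \<open>L = \<phi>^b + \<phi>^(-b) - \<phi>^a - \<phi>^(-a)\<close>, so by
  nondegeneracy of the trace the radical is \<open>ker L = ker ((\<phi>^s - 1) \<circ> (\<phi>^d - 1))\<close>.
  The kernel of \<open>\<phi>^d - 1\<close> is \<open>F_{q^g}\<close> with \<open>g = (d, n)\<close>, and its image is the kernel of the
  trace onto \<open>F_{q^g}\<close> (additive Hilbert 90); hence the radical has \<open>q^g\<close> times as many
  elements as the kernel of that trace on \<open>F_{q^h}\<close>, \<open>h = (s, n)\<close>. On \<open>F_{q^h}\<close> this trace is
  \<open>n / lcm(g, h)\<close> times the trace of \<open>F_{q^h}\<close> over \<open>F_{q^(g,h)}\<close>. So it vanishes identically
  when \<open>p\<close> divides \<open>n / lcm(g, h)\<close>, i.e. when \<open>\<nu>_p(n) > max(\<nu>_p(s), \<nu>_p(d))\<close>, and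
  otherwise its kernel has \<open>q^(h - (g,h))\<close> elements. Finally, an \<open>F_q\<close>-subspace with \<open>q^N\<close>
  elements has dimension \<open>N\<close>.
\<close>

lemma finite_field_power_card_UNIV:
  fixes x :: "'a::{finite,field}"
  shows "x ^ card (UNIV :: 'a set) = x"
proof (cases "x = 0")
  case True
  then show ?thesis using finite_UNIV_card_ge_0[where ?'a = 'a] by simp
next
  case False
  let ?U = "UNIV - {0} :: 'a set"
  have "(\<Prod>y\<in>?U. x * y) = (\<Prod>y\<in>?U. y)"
    by (rule prod.reindex_bij_witness[of _ "\<lambda>y. y / x" "\<lambda>y. x * y"]) (use False in auto)
  then have "x ^ card ?U = 1"
    by (simp add: prod.distrib)
  have "card (UNIV :: 'a set) = Suc (card ?U)"
    using card_Suc_Diff1[of UNIV "0::'a"] by simp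
  then have "x ^ card (UNIV :: 'a set) = x * x ^ card ?U" by (simp only: power_Suc)
  with \<open>x ^ card ?U = 1\<close> show ?thesis by simp
qed

lemma card_eq_card_kernel_mult_card_image:
  fixes f :: "'a::ab_group_add \<Rightarrow> 'b::ab_group_add"
  assumes "finite A"
    and diff_closed: "\<And>x y. x \<in> A \<Longrightarrow> y \<in> A \<Longrightarrow> x - y \<in> A"
    and f_diff: "\<And>x y. x \<in> A \<Longrightarrow> y \<in> A \<Longrightarrow> f (x - y) = f x - f y"
  shows "card A = card {x\<in>A. f x = 0} * card (f ` A)"
proof -
  have fibre: "card {x\<in>A. f x = f x0} = card {x\<in>A. f x = 0}" if "x0 \<in> A" for x0
  proof (rule bij_betw_same_card)
    show "bij_betw (\<lambda>x. x0 - x) {x\<in>A. f x = f x0} {x\<in>A. f x = 0}"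
      by (rule bij_betw_byWitness[of _ "\<lambda>x. x0 - x"]) (use that diff_closed f_diff in auto)
  qed
  have "card A = card (\<Union>y\<in>f ` A. {x\<in>A. f x = y})" by (rule arg_cong[of _ _ card]) auto
  also have "\<dots> = (\<Sum>y\<in>f ` A. card {x\<in>A. f x = y})"
    by (rule card_UN_disjoint) (use \<open>finite A\<close> in auto)
  also have "\<dots> = (\<Sum>y\<in>f ` A. card {x\<in>A. f x = 0})"
    using fibre by (intro sum.cong) auto
  finally show ?thesis by simp
qed

lemma of_nat_card_UNIV_eq_0:
  "of_nat (card (UNIV :: 'a::{finite,ring_1} set)) = (0::'a)"
proof -
  have "(\<Sum>y\<in>(UNIV::'a set). y + 1) = (\<Sum>y\<in>UNIV. y)"
    by (rule sum.reindex_bij_witness[of _ "\<lambda>y. y - 1" "\<lambda>y. y + 1"]) auto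
  then show ?thesis by (simp add: sum.distrib)
qed

lemma card_roots_sum_powers_le:
  fixes e :: "nat \<Rightarrow> nat"
  assumes "m > 0" and "e 0 = 1" and "\<And>i. 0 < i \<Longrightarrow> i < m \<Longrightarrow> e i \<noteq> 1"
    and "\<And>i. i < m \<Longrightarrow> e i \<le> B"
  shows "card {x::'a::idom. (\<Sum>i<m. x ^ e i) = 0} \<le> B"
proof -
  define P :: "'a poly" where "P = (\<Sum>i<m. monom 1 (e i))"
  have "coeff P 1 = (\<Sum>i<m. if i = 0 then 1 else 0)"
    unfolding P_def coeff_sum coeff_monom using assms(2,3) by (intro sum.cong) auto
  also have "\<dots> = 1" using \<open>m > 0\<close> by simp
  finally have "P \<noteq> 0" by auto
  have "degree P \<le> B"
    unfolding P_def by (rule degree_sum_le) (use assms(4) in \<open>auto simp: degree_monom_eq\<close>)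
  have "{x::'a. (\<Sum>i<m. x ^ e i) = 0} = {x. poly P x = 0}"
    by (simp add: P_def poly_sum poly_monom)
  with card_poly_roots_bound[OF \<open>P \<noteq> 0\<close>] \<open>degree P \<le> B\<close> show ?thesis by simp
qed

lemma card_fixed_points_power_le:
  assumes "Q \<ge> 2"
  shows "card {x::'a::idom. x ^ Q = x} \<le> Q"
proof -
  define P :: "'a poly" where "P = monom 1 Q - [:0, 1:]"
  have "coeff P Q = 1" using assms by (simp add: P_def coeff_pCons split: nat.split)
  then have "P \<noteq> 0" by auto
  have "degree P \<le> Q"
    unfolding P_def by (rule degree_diff_le) (use assms in \<open>auto simp: degree_monom_eq\<close>)
  have "{x::'a. x ^ Q = x} = {x. poly P x = 0}" by (simp add: P_def poly_monom)
  with card_poly_roots_bound[OF \<open>P \<noteq> 0\<close>] \<open>degree P \<le> Q\<close> show ?thesis by simp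
qed

lemma prime_dvd_div_gcd_iff_multiplicity_less:
  fixes p m n :: nat
  assumes "prime p" and "m > 0" and "n > 0"
  shows "p dvd n div gcd m n \<longleftrightarrow> multiplicity p m < multiplicity p n"
proof -
  define t where "t = n div gcd m n"
  have n_eq: "n = gcd m n * t" by (simp add: t_def)
  have "t > 0" using \<open>n > 0\<close> n_eq by (cases t) auto
  have "multiplicity p n = multiplicity p (gcd m n) + multiplicity p t"
    using assms \<open>t > 0\<close> by (subst n_eq) (simp add: prime_elem_multiplicity_mult_distrib)
  also have "multiplicity p (gcd m n) = min (multiplicity p m) (multiplicity p n)"
    using assms by (simp add: multiplicity_gcd)
  finally have "multiplicity p n = min (multiplicity p m) (multiplicity p n) + multiplicity p t" .
  moreover have "p dvd t \<longleftrightarrow> multiplicity p t > 0"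
    using assms(1) \<open>t > 0\<close> by (simp add: prime_multiplicity_gt_zero_iff)
  ultimately show ?thesis unfolding t_def by linarith
qed

lemma mult_mod_ne_0:
  fixes g h r :: nat
  assumes "g > 0" and "0 < r" and "r < h div gcd g h"
  shows "g * r mod h \<noteq> 0"
proof
  assume "g * r mod h = 0"
  define e where "e = gcd g h"
  have "e > 0" using \<open>g > 0\<close> by (simp add: e_def)
  have "e * (h div e) dvd e * (g div e * r)"
    using \<open>g * r mod h = 0\<close> by (simp add: e_def mult.assoc[symmetric] mod_eq_0_iff_dvd)
  then have "h div e dvd g div e * r" using \<open>e > 0\<close> by simp
  moreover have "coprime (h div e) (g div e)"
    using div_gcd_coprime[of g h] \<open>g > 0\<close> by (simp add: e_def coprime_commute)
  ultimately have "h div e dvd r" by (simp add: coprime_dvd_mult_right_iff)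
  then show False using assms(2,3) by (auto simp: e_def dest: dvd_imp_le)
qed

lemma mult_mod_le_diff_gcd:
  fixes g h r :: nat
  assumes "h > 0"
  shows "g * r mod h \<le> h - gcd g h"
proof -
  have "gcd g h dvd g * r mod h" by (simp add: dvd_mod)
  then obtain u where u: "g * r mod h = gcd g h * u" by blast
  obtain v where v: "h = gcd g h * v" using gcd_dvd2[of g h] by (elim dvdE)
  have "u < v" using u v mod_less_divisor[OF assms, of "g * r"] by (metis mult_less_cancel1)
  then have "gcd g h * u \<le> gcd g h * (v - 1)" by (intro mult_le_mono2) linarith
  then show ?thesis using u v by (simp add: algebra_simps)
qed

section \<open>Dimension over a subfield from cardinalities\<close>

lemma (in ring) card_dimension:
  assumes K: "subfield K R" and "finite K" and "dimension n K E"
  shows "card E = card K ^ n"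
proof -
  obtain Us where Us: "set Us \<subseteq> carrier R" "independent K Us" "length Us = n" "Span K Us = E"
    using exists_base[OF K \<open>dimension n K E\<close>] by (elim exE conjE) (rule that)
  let ?Coeffs = "{Ks. set Ks \<subseteq> K \<and> length Ks = n}"
  have "bij_betw (\<lambda>Ks. combine Ks Us) ?Coeffs E"
  proof (rule bij_betw_imageI)
    show "inj_on (\<lambda>Ks. combine Ks Us) ?Coeffs"
    proof (rule inj_onI)
      fix Ks Ks' assume Ks: "Ks \<in> ?Coeffs" and Ks': "Ks' \<in> ?Coeffs"
        and eq: "combine Ks Us = combine Ks' Us"
      have "combine Ks Us \<in> Span K Us"
        by (rule iffD2[OF Span_mem_iff_length_version[OF K Us(1)]]) (use Ks Us(3) in auto)
      then have "\<exists>!Ks''. set Ks'' \<subseteq> K \<and> length Ks'' = length Us \<and> combine Ks Us = combine Ks'' Us"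
        by (rule unique_decomposition[OF K Us(2)])
      moreover have "set Ks \<subseteq> K" "length Ks = length Us" "set Ks' \<subseteq> K" "length Ks' = length Us"
        using Ks Ks' Us(3) by simp_all
      ultimately show "Ks = Ks'" using eq by (elim ex1E) blast
    qed
    show "(\<lambda>Ks. combine Ks Us) ` ?Coeffs = E"
    proof (intro equalityI subsetI)
      fix a assume "a \<in> (\<lambda>Ks. combine Ks Us) ` ?Coeffs"
      then obtain Ks where "set Ks \<subseteq> K" "length Ks = length Us" "a = combine Ks Us"
        using Us(3) by auto
      then have "a \<in> Span K Us" using Span_mem_iff_length_version[OF K Us(1)] by blast
      then show "a \<in> E" by (simp only: Us(4))
    next
      fix a assume "a \<in> E"
      then have "a \<in> Span K Us" by (simp only: Us(4))
      then obtain Ks where "set Ks \<subseteq> K" "length Ks = length Us" "a = combine Ks Us"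
        using Span_mem_iff_length_version[OF K Us(1)] by blast
      then show "a \<in> (\<lambda>Ks. combine Ks Us) ` ?Coeffs" using Us(3) by blast
    qed
  qed
  then have "card E = card ?Coeffs" by (simp only: bij_betw_same_card)
  then show ?thesis using card_lists_length_eq[OF \<open>finite K\<close>] by simp
qed

lemma (in ring) dimension_of_card:
  assumes K: "subfield K R" and "finite (carrier R)" and E: "subalgebra K E R"
    and "card E = card K ^ n"
  shows "dimension n K E"
proof -
  obtain Us where Us: "set Us = carrier R" using finite_list[OF \<open>finite (carrier R)\<close>] by blast
  have K_carrier: "K \<subseteq> carrier R" using subfieldE(3)[OF K] .
  have "Span K Us = carrier R"
    using Span_in_carrier[OF K_carrier] Span_base_incl[OF K] Us by (metis order_refl subset_antisym)
  moreover have "finite_dimension K (Span K Us)"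
    using Span_finite_dimension[OF K] Us by (metis order_refl)
  ultimately have "finite_dimension K (carrier R)" by (simp only:)
  then have "finite_dimension K E"
    by (rule subalbegra_incl_imp_finite_dimension[OF K _ E subalgebra_in_carrier[OF E]])
  then obtain m where m: "dimension m K E" by (rule finite_dimensionE')
  have "finite K" using K_carrier \<open>finite (carrier R)\<close> by (rule finite_subset)
  have "\<zero> \<in> K" "\<one> \<in> K" "\<one> \<noteq> \<zero>"
    using subringE(2,3)[OF subfieldE(1)[OF K]] subfieldE(6)[OF K] by auto
  then have "card K \<ge> 2"
    using card_mono[OF \<open>finite K\<close>, of "{\<zero>, \<one>}"] by simp
  moreover have "card K ^ m = card K ^ n"
    using card_dimension[OF K \<open>finite K\<close> m] \<open>card E = card K ^ n\<close> by simp
  ultimately show ?thesis using m by simp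
qed

lemma a_inv_ring_of_type_algebra:
  "a_inv (ring_of_type_algebra :: 'a::comm_ring_1 ring) x = - x"
proof -
  interpret R: ring "ring_of_type_algebra :: 'a ring" by (rule ring_from_type_algebra)
  show ?thesis by (rule R.minus_equality) (auto simp: ring_of_type_algebra_def)
qed

lemma m_inv_ring_of_type_algebra:
  "x \<noteq> 0 \<Longrightarrow> m_inv (ring_of_type_algebra :: 'a::field ring) x = inverse x"
proof -
  interpret R: field "ring_of_type_algebra :: 'a ring" by (rule field_from_type_algebra)
  show "x \<noteq> 0 \<Longrightarrow> ?thesis" by (rule R.comm_inv_char) (auto simp: ring_of_type_algebra_def)
qed

lemma subfield_ring_of_type_algebraI:
  fixes K :: "'a::field set"
  assumes "1 \<in> K" and "\<And>x. x \<in> K \<Longrightarrow> - x \<in> K" and "\<And>x y. x \<in> K \<Longrightarrow> y \<in> K \<Longrightarrow> x + y \<in> K"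
    and "\<And>x y. x \<in> K \<Longrightarrow> y \<in> K \<Longrightarrow> x * y \<in> K" and "\<And>x. x \<in> K \<Longrightarrow> inverse x \<in> K"
  shows "subfield K (ring_of_type_algebra :: 'a ring)"
proof -
  interpret R: field "ring_of_type_algebra :: 'a ring" by (rule field_from_type_algebra)
  show ?thesis
  proof (rule R.subfieldI')
    show "subring K (ring_of_type_algebra :: 'a ring)"
    proof (rule R.subringI)
      show "a_inv (ring_of_type_algebra :: 'a ring) x \<in> K" if "x \<in> K" for x
        using assms(2)[OF that] by (simp add: a_inv_ring_of_type_algebra)
    qed (use assms in \<open>auto simp: ring_of_type_algebra_def\<close>)
    show "m_inv (ring_of_type_algebra :: 'a ring) x \<in> K" if "x \<in> K - {\<zero>\<^bsub>ring_of_type_algebra :: 'a ring\<^esub>}" for x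
    proof -
      have "x \<in> K" "x \<noteq> 0" using that by (auto simp: ring_of_type_algebra_def)
      then show ?thesis using assms(5) by (simp add: m_inv_ring_of_type_algebra)
    qed
  qed
qed

lemma subalgebra_ring_of_type_algebraI:
  fixes K E :: "'a::comm_ring_1 set"
  assumes "0 \<in> E" and "\<And>x. x \<in> E \<Longrightarrow> - x \<in> E" and "\<And>x y. x \<in> E \<Longrightarrow> y \<in> E \<Longrightarrow> x + y \<in> E"
    and "\<And>c x. c \<in> K \<Longrightarrow> x \<in> E \<Longrightarrow> c * x \<in> E"
  shows "subalgebra K E (ring_of_type_algebra :: 'a ring)"
proof -
  interpret R: ring "ring_of_type_algebra :: 'a ring" by (rule ring_from_type_algebra)
  show ?thesis
  proof (intro subalgebra.intro)
    show "subgroup E (add_monoid (ring_of_type_algebra :: 'a ring))"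
    proof (rule R.add.subgroupI)
      show "a_inv (ring_of_type_algebra :: 'a ring) x \<in> E" if "x \<in> E" for x
        using assms(2)[OF that] by (simp add: a_inv_ring_of_type_algebra)
    qed (use assms in \<open>auto simp: ring_of_type_algebra_def\<close>)
    show "subalgebra_axioms K E (ring_of_type_algebra :: 'a ring)"
      using assms(4) by (simp add: subalgebra_axioms_def ring_of_type_algebra_def)
  qed
qed

section \<open>Frobenius powers and relative traces in \<open>F_{q^n}\<close>\<close>

lemma mem_subfield_Fq_iff [simp]: "x \<in> subfield_Fq Q \<longleftrightarrow> x ^ Q = x"
  by (simp add: subfield_Fq_def)

locale Fq_extension =
  fixes p k q n :: nat and ty :: "'F::{finite,field} itself"
  assumes prime_p: "prime p" and k_pos: "k \<ge> 1" and q_eq: "q = p ^ k"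
    and card_UNIV_eq: "card (UNIV :: 'F set) = q ^ n" and n_pos: "n > 0"
begin

lemma q_ge_2: "q \<ge> 2"
proof -
  have "p ^ 1 \<le> p ^ k" using k_pos prime_gt_0_nat[OF prime_p] by (intro power_increasing) auto
  then show ?thesis using prime_ge_2_nat[OF prime_p] q_eq by simp
qed

lemma CHAR_eq: "CHAR('F) = p"
proof -
  have "of_nat (card (UNIV :: 'F set)) = (0::'F)" by (rule of_nat_card_UNIV_eq_0)
  then have "of_nat (p ^ (k * n)) = (0::'F)" using card_UNIV_eq q_eq by (simp add: power_mult)
  then have "CHAR('F) dvd p ^ (k * n)" by (simp only: of_nat_eq_0_iff_char_dvd)
  moreover have "prime CHAR('F)" by (rule prime_CHAR_semidom, rule finite_imp_CHAR_pos) simp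
  ultimately show ?thesis using prime_p by (metis prime_dvd_power primes_dvd_imp_eq)
qed

lemma frobenius_add: "((x::'F) + y) ^ q ^ j = x ^ q ^ j + y ^ q ^ j"
  by (rule freshmans_dream'[where n = "k * j"]) (simp_all add: CHAR_eq prime_p q_eq power_mult)

lemma frobenius_diff: "((x::'F) - y) ^ q ^ j = x ^ q ^ j - y ^ q ^ j"
proof -
  have "(x - y) ^ q ^ j + y ^ q ^ j = x ^ q ^ j" by (simp flip: frobenius_add)
  then show ?thesis by (simp add: eq_diff_eq)
qed

lemma power_q_power_power: "((x::'F) ^ q ^ i) ^ q ^ j = x ^ q ^ (i + j)"
  by (simp add: power_mult[symmetric] power_add)

lemma power_q_power_n: "(x::'F) ^ q ^ n = x"
  using finite_field_power_card_UNIV[of x] card_UNIV_eq by simp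

lemma subfield_Fq_power_mult: "x \<in> subfield_Fq (q ^ a) \<Longrightarrow> (x::'F) \<in> subfield_Fq (q ^ (a * t))"
proof (induction t)
  case (Suc t)
  have "x ^ q ^ (a * Suc t) = (x ^ q ^ a) ^ q ^ (a * t)" by (simp add: power_q_power_power algebra_simps)
  with Suc show ?case by simp
qed simp

lemma power_q_power_mult_n_add: "(x::'F) ^ q ^ (n * t + j) = x ^ q ^ j"
  using subfield_Fq_power_mult[of x n t] power_q_power_n power_q_power_power[of x "n * t" j] by simp

lemma subfield_Fq_mono: "c dvd a \<Longrightarrow> subfield_Fq (q ^ c) \<subseteq> (subfield_Fq (q ^ a) :: 'F set)"
  using subfield_Fq_power_mult by (auto elim!: dvdE)

lemma power_q_power_mod: "x \<in> subfield_Fq (q ^ h) \<Longrightarrow> (x::'F) ^ q ^ i = x ^ q ^ (i mod h)"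
  using subfield_Fq_power_mult[of x h "i div h"] power_q_power_power[of x "h * (i div h)" "i mod h"]
  by simp

lemma subfield_Fq_Int:
  assumes "a > 0"
  shows "subfield_Fq (q ^ a) \<inter> subfield_Fq (q ^ b) = (subfield_Fq (q ^ gcd a b) :: 'F set)"
proof (intro equalityI subsetI)
  fix x :: 'F assume x: "x \<in> subfield_Fq (q ^ a) \<inter> subfield_Fq (q ^ b)"
  obtain u v where uv: "a * u = b * v + gcd a b" using bezout_nat[of a b] assms by auto
  have "x = x ^ q ^ (a * u)" using subfield_Fq_power_mult[of x a u] x by simp
  also have "\<dots> = (x ^ q ^ (b * v)) ^ q ^ gcd a b" by (simp add: uv power_q_power_power)
  also have "\<dots> = x ^ q ^ gcd a b" using subfield_Fq_power_mult[of x b v] x by simp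
  finally show "x \<in> subfield_Fq (q ^ gcd a b)" by simp
qed (use subfield_Fq_mono[of "gcd a b" a] subfield_Fq_mono[of "gcd a b" b] in auto)

lemma subfield_Fq_gcd_n: "subfield_Fq (q ^ j) = (subfield_Fq (q ^ gcd j n) :: 'F set)"
proof (cases "j = 0")
  case False
  then show ?thesis using subfield_Fq_Int[of j n] power_q_power_n by auto
qed (auto simp: subfield_Fq_def power_q_power_n)

definition frob_minus_id :: "nat \<Rightarrow> 'F \<Rightarrow> 'F" where
  "frob_minus_id j x = x ^ q ^ j - x"

text \<open>For \<open>g\<close> dividing \<open>n\<close>, the trace of \<open>F_{q^n}\<close> over \<open>F_{q^g}\<close>.\<close>

definition rel_trace :: "nat \<Rightarrow> 'F \<Rightarrow> 'F" where
  "rel_trace g x = (\<Sum>i<n div g. x ^ q ^ (g * i))"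

lemma frob_minus_id_add: "frob_minus_id j (x + y) = frob_minus_id j x + frob_minus_id j y"
  by (simp add: frob_minus_id_def frobenius_add)

lemma frob_minus_id_diff: "frob_minus_id j (x - y) = frob_minus_id j x - frob_minus_id j y"
  by (simp add: frob_minus_id_def frobenius_diff)

lemma frob_minus_id_0 [simp]: "frob_minus_id j 0 = 0"
  using frob_minus_id_diff[of j 0 0] by simp

lemma frob_minus_id_minus: "frob_minus_id j (- x) = - frob_minus_id j x"
  using frob_minus_id_diff[of j 0 x] by simp

lemma frob_minus_id_eq_0_iff: "frob_minus_id j x = 0 \<longleftrightarrow> x \<in> subfield_Fq (q ^ j)"
  by (simp add: frob_minus_id_def)

lemma rel_trace_diff: "rel_trace g (x - y) = rel_trace g x - rel_trace g y"
  by (simp add: rel_trace_def frobenius_diff sum_subtractf)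

lemma rel_trace_power_q_power:
  assumes "g dvd n" and "g > 0"
  shows "rel_trace g (x ^ q ^ (g * t)) = rel_trace g x"
proof (induction t)
  case (Suc t)
  define f where "f i = x ^ q ^ (g * i)" for i
  have "rel_trace g (x ^ q ^ (g * Suc t)) = rel_trace g (f t ^ q ^ g)"
    by (simp add: f_def power_q_power_power algebra_simps)
  also have "\<dots> = (\<Sum>i<n div g. f (Suc i + t))"
    by (simp add: rel_trace_def f_def power_q_power_power algebra_simps)
  also have "\<dots> = (\<Sum>i<Suc (n div g). f (i + t)) - f t" by (subst sum.lessThan_Suc_shift) simp
  also have "f (n div g + t) = f t"
    using assms power_q_power_mult_n_add[of x 1 "g * t"] by (simp add: f_def algebra_simps)
  then have "(\<Sum>i<Suc (n div g). f (i + t)) - f t = (\<Sum>i<n div g. f (i + t))" by simp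
  also have "\<dots> = rel_trace g (f t)"
    by (simp add: rel_trace_def f_def power_q_power_power algebra_simps)
  finally show ?case using Suc by (simp add: f_def)
qed simp

lemma rel_trace_frob_minus_id:
  assumes "g dvd n" and "g > 0" and "g dvd d"
  shows "rel_trace g (frob_minus_id d x) = 0"
  using assms rel_trace_power_q_power[OF assms(1,2)]
  by (auto simp: frob_minus_id_def rel_trace_diff elim!: dvdE)

lemma card_rel_trace_kernel_le:
  assumes "g dvd n" and "g > 0"
  shows "card {x::'F. rel_trace g x = 0} \<le> q ^ (n - g)"
proof -
  have "n div g > 0" using assms n_pos by (simp add: div_greater_zero_iff dvd_imp_le)
  have "card {x::'F. (\<Sum>i<n div g. x ^ q ^ (g * i)) = 0} \<le> q ^ (g * (n div g - 1))"
  proof (rule card_roots_sum_powers_le)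
    show "q ^ (g * i) \<noteq> 1" if "0 < i" for i using that q_ge_2 assms(2) by simp
    show "q ^ (g * i) \<le> q ^ (g * (n div g - 1))" if "i < n div g" for i
      using that q_ge_2 by (intro power_increasing) auto
  qed (use \<open>n div g > 0\<close> in simp_all)
  moreover have "g * (n div g - 1) = n - g" using assms(1) by (simp add: algebra_simps)
  ultimately show ?thesis by (simp add: rel_trace_def)
qed

lemma card_UNIV_eq_card_subfield_Fq_mult_card_range:
  "q ^ n = card (subfield_Fq (q ^ j) :: 'F set) * card (range (frob_minus_id j))"
proof -
  have "card (UNIV :: 'F set) = card {x\<in>UNIV. frob_minus_id j x = 0} * card (range (frob_minus_id j))"
    by (rule card_eq_card_kernel_mult_card_image) (auto simp: frob_minus_id_diff)
  then show ?thesis by (simp add: card_UNIV_eq frob_minus_id_eq_0_iff subfield_Fq_def)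
qed

lemma card_subfield_Fq_dvd:
  assumes "g dvd n" and "g > 0"
  shows "card (subfield_Fq (q ^ g) :: 'F set) = q ^ g"
proof (rule antisym)
  have "q ^ g \<ge> 2" using q_ge_2 power_increasing[of 1 g q] assms(2) by simp
  then show "card (subfield_Fq (q ^ g) :: 'F set) \<le> q ^ g"
    unfolding subfield_Fq_def by (rule card_fixed_points_power_le)
next
  have "card (range (frob_minus_id g)) \<le> card {x::'F. rel_trace g x = 0}"
    using rel_trace_frob_minus_id[OF assms] by (intro card_mono) auto
  also have "\<dots> \<le> q ^ (n - g)" by (rule card_rel_trace_kernel_le[OF assms])
  finally have range_le: "card (range (frob_minus_id g)) \<le> q ^ (n - g)" .
  have "q ^ g * q ^ (n - g) = q ^ n"
    using dvd_imp_le[OF assms(1) n_pos] by (simp flip: power_add)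
  also have "\<dots> = card (subfield_Fq (q ^ g) :: 'F set) * card (range (frob_minus_id g))"
    by (rule card_UNIV_eq_card_subfield_Fq_mult_card_range)
  also have "\<dots> \<le> card (subfield_Fq (q ^ g) :: 'F set) * q ^ (n - g)"
    by (intro mult_le_mono2 range_le)
  finally show "q ^ g \<le> card (subfield_Fq (q ^ g) :: 'F set)" using q_ge_2 by simp
qed

lemma card_subfield_Fq: "card (subfield_Fq (q ^ j) :: 'F set) = q ^ gcd j n"
  using card_subfield_Fq_dvd[of "gcd j n"] n_pos subfield_Fq_gcd_n[of j] by simp

lemma range_frob_minus_id:
  assumes "d > 0"
  shows "range (frob_minus_id d) = {x. rel_trace (gcd d n) x = 0}"
proof (rule card_seteq)
  let ?g = "gcd d n"
  show "range (frob_minus_id d) \<subseteq> {x. rel_trace ?g x = 0}"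
    using rel_trace_frob_minus_id[of ?g d] n_pos by auto
  have "q ^ ?g * q ^ (n - ?g) = q ^ ?g * card (range (frob_minus_id d))"
    using card_UNIV_eq_card_subfield_Fq_mult_card_range[of d] card_subfield_Fq[of d]
      dvd_imp_le[of ?g n] n_pos by (simp flip: power_add)
  then show "card {x. rel_trace ?g x = 0} \<le> card (range (frob_minus_id d))"
    using card_rel_trace_kernel_le[of ?g] n_pos q_ge_2 by simp
qed simp

lemma rel_trace_on_subfield_Fq:
  assumes "g dvd n" and "h dvd n" and "g > 0" and "x \<in> subfield_Fq (q ^ h)"
  shows "rel_trace g x = of_nat (n div lcm g h) * (\<Sum>r<h div gcd g h. x ^ q ^ (g * r))"
proof -
  define a where "a = h div gcd g h"
  define c where "c = n div lcm g h"
  define f where "f i = x ^ q ^ (g * i)" for i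
  have lcm_eq: "lcm g h = g * a" by (simp add: a_def lcm_nat_def div_mult_swap)
  have "g * a dvd n" using lcm_least[OF assms(1,2)] lcm_eq by simp
  then obtain c' where "n = g * a * c'" by (elim dvdE)
  then have "n div g = c * a" using \<open>g > 0\<close> lcm_eq by (cases "a = 0") (simp_all add: c_def)
  have period: "f (r + j * a) = f r" for r j
  proof -
    have "h dvd g * (a * j)" using lcm_eq by (metis dvd_lcm2 dvd_mult2 mult.assoc)
    then have "x ^ q ^ (g * (a * j)) = x" using subsetD[OF subfield_Fq_mono assms(4)] by simp
    then show ?thesis
      using power_q_power_power[of x "g * (a * j)" "g * r"] by (simp add: f_def algebra_simps)
  qed
  have "rel_trace g x = (\<Sum>j<c. sum f {j * a..<j * a + a})"
    by (simp add: rel_trace_def \<open>n div g = c * a\<close> f_def sum.nat_group)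
  also have "\<dots> = (\<Sum>j<c. \<Sum>r<a. f r)"
  proof (rule sum.cong[OF refl])
    fix j
    have "sum f {j * a..<j * a + a} = sum f {0 + j * a..<a + j * a}" by (simp add: add.commute)
    also have "\<dots> = (\<Sum>r = 0..<a. f (r + j * a))" by (rule sum.shift_bounds_nat_ivl)
    finally show "sum f {j * a..<j * a + a} = (\<Sum>r<a. f r)" by (simp add: period atLeast0LessThan)
  qed
  finally show ?thesis by (simp add: c_def a_def f_def)
qed

lemma sum_power_frob_minus_id:
  "(\<Sum>r<a. frob_minus_id g x ^ q ^ (g * r)) = x ^ q ^ (g * a) - x"
proof -
  define f where "f r = x ^ q ^ (g * r)" for r
  have "frob_minus_id g x ^ q ^ (g * r) = f (Suc r) - f r" for r
    by (simp add: f_def frob_minus_id_def frobenius_diff power_q_power_power algebra_simps)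
  then have "(\<Sum>r<a. frob_minus_id g x ^ q ^ (g * r)) = f a - f 0"
    by (simp only: sum_lessThan_telescope)
  then show ?thesis by (simp add: f_def)
qed

lemma frob_minus_id_subfield_Fq:
  assumes "x \<in> subfield_Fq (q ^ h)"
  shows "frob_minus_id g x \<in> subfield_Fq (q ^ h)"
proof -
  have "(x ^ q ^ g) ^ q ^ h = (x ^ q ^ h) ^ q ^ g" by (simp only: power_q_power_power add.commute)
  then show ?thesis using assms by (simp add: frob_minus_id_def frobenius_diff)
qed

lemma card_image_frob_minus_id_subfield_Fq:
  assumes "g dvd n" and "g > 0" and "h dvd n" and "h > 0"
  shows "card (frob_minus_id g ` subfield_Fq (q ^ h)) = q ^ (h - gcd g h)"
proof -
  let ?A = "subfield_Fq (q ^ h) :: 'F set"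
  have "gcd g h dvd n" "gcd g h > 0" using assms by (auto intro: dvd_trans)
  have "card ?A = card {x\<in>?A. frob_minus_id g x = 0} * card (frob_minus_id g ` ?A)"
    by (rule card_eq_card_kernel_mult_card_image) (auto simp: frob_minus_id_diff frobenius_diff)
  also have "{x\<in>?A. frob_minus_id g x = 0} = subfield_Fq (q ^ g) \<inter> ?A"
    unfolding frob_minus_id_eq_0_iff by blast
  also have "\<dots> = subfield_Fq (q ^ gcd g h)" by (rule subfield_Fq_Int[OF assms(2)])
  finally have "q ^ gcd g h * q ^ (h - gcd g h) = q ^ gcd g h * card (frob_minus_id g ` ?A)"
    using card_subfield_Fq_dvd[OF assms(3,4)] card_subfield_Fq_dvd[OF \<open>gcd g h dvd n\<close> \<open>gcd g h > 0\<close>]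
      assms(4) by (simp flip: power_add add: gcd_le2_nat)
  then show ?thesis using q_ge_2 by simp
qed

text \<open>
  The sum is the trace of \<open>F_{q^h}\<close> over \<open>F_{q^(g,h)}\<close>, written with the generator \<open>\<phi>^g\<close>
  of its Galois group; reducing its exponents modulo \<open>h\<close> bounds the number of its roots.
\<close>

lemma card_partial_trace_kernel:
  assumes "g dvd n" and "g > 0" and "h dvd n" and "h > 0"
  shows "card {x::'F \<in> subfield_Fq (q ^ h). (\<Sum>r<h div gcd g h. x ^ q ^ (g * r)) = 0} = q ^ (h - gcd g h)"
    (is "card ?W = _")
proof (rule antisym)
  let ?a = "h div gcd g h"
  have "?W \<subseteq> {x::'F. (\<Sum>r<?a. x ^ q ^ (g * r mod h)) = 0}"
  proof clarify
    fix x :: 'F assume x: "x \<in> subfield_Fq (q ^ h)" and "(\<Sum>r<?a. x ^ q ^ (g * r)) = 0"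
    moreover have "(\<Sum>r<?a. x ^ q ^ (g * r mod h)) = (\<Sum>r<?a. x ^ q ^ (g * r))"
      by (intro sum.cong refl power_q_power_mod[OF x, symmetric])
    ultimately show "(\<Sum>r<?a. x ^ q ^ (g * r mod h)) = 0" by simp
  qed
  then have "card ?W \<le> card {x::'F. (\<Sum>r<?a. x ^ q ^ (g * r mod h)) = 0}"
    by (intro card_mono) auto
  also have "\<dots> \<le> q ^ (h - gcd g h)"
  proof (rule card_roots_sum_powers_le)
    show "0 < ?a" using assms(4) by (simp add: div_greater_zero_iff gcd_le2_nat)
    show "q ^ (g * r mod h) \<noteq> 1" if "0 < r" "r < ?a" for r
      using mult_mod_ne_0[OF assms(2) that] q_ge_2 by simp
    show "q ^ (g * r mod h) \<le> q ^ (h - gcd g h)" for r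
      using mult_mod_le_diff_gcd[OF assms(4)] q_ge_2 by (intro power_increasing) auto
  qed simp
  finally show "card ?W \<le> q ^ (h - gcd g h)" .
next
  have "frob_minus_id g ` subfield_Fq (q ^ h) \<subseteq> ?W"
  proof (rule image_subsetI)
    fix x :: 'F assume x: "x \<in> subfield_Fq (q ^ h)"
    have "g * (h div gcd g h) = lcm g h" by (simp add: lcm_nat_def div_mult_swap)
    then have "h dvd g * (h div gcd g h)" by simp
    then have "x ^ q ^ (g * (h div gcd g h)) = x" using subsetD[OF subfield_Fq_mono x] by simp
    then show "frob_minus_id g x \<in> ?W"
      using frob_minus_id_subfield_Fq[OF x] by (simp add: sum_power_frob_minus_id)
  qed
  then have "card (frob_minus_id g ` subfield_Fq (q ^ h)) \<le> card ?W" by (intro card_mono) auto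
  then show "q ^ (h - gcd g h) \<le> card ?W" by (simp only: card_image_frob_minus_id_subfield_Fq[OF assms])
qed

lemma card_rel_trace_kernel_subfield_Fq:
  assumes "g dvd n" and "g > 0" and "h dvd n" and "h > 0"
  shows "card {x \<in> subfield_Fq (q ^ h). rel_trace g x = 0} =
    (if p dvd n div lcm g h then q ^ h else q ^ (h - gcd g h))"
proof (cases "p dvd n div lcm g h")
  case True
  then have "of_nat (n div lcm g h) = (0::'F)" by (simp add: CHAR_eq of_nat_eq_0_iff_char_dvd)
  then have "{x \<in> subfield_Fq (q ^ h). rel_trace g x = 0} = subfield_Fq (q ^ h)"
    using rel_trace_on_subfield_Fq[OF assms(1,3,2)] by auto
  then show ?thesis using True card_subfield_Fq_dvd[OF assms(3,4)] by simp
next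
  case False
  then have "of_nat (n div lcm g h) \<noteq> (0::'F)" by (simp add: CHAR_eq of_nat_eq_0_iff_char_dvd)
  then have "{x \<in> subfield_Fq (q ^ h). rel_trace g x = 0} =
      {x \<in> subfield_Fq (q ^ h). (\<Sum>r<h div gcd g h. x ^ q ^ (g * r)) = 0}"
    using rel_trace_on_subfield_Fq[OF assms(1,3,2)] by auto
  then show ?thesis using False card_partial_trace_kernel[OF assms] by simp
qed

lemma card_kernel_frob_minus_id_comp:
  assumes "d > 0"
  shows "card {x. frob_minus_id s (frob_minus_id d x) = 0} =
    q ^ gcd d n * card {x \<in> subfield_Fq (q ^ gcd s n). rel_trace (gcd d n) x = 0}"
proof -
  let ?K = "{x. frob_minus_id s (frob_minus_id d x) = 0}"
  have "card ?K = card {x\<in>?K. frob_minus_id d x = 0} * card (frob_minus_id d ` ?K)"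
    by (rule card_eq_card_kernel_mult_card_image) (auto simp: frob_minus_id_diff)
  also have "{x\<in>?K. frob_minus_id d x = 0} = subfield_Fq (q ^ d)"
    unfolding set_eq_iff frob_minus_id_eq_0_iff[symmetric] by auto
  also have "frob_minus_id d ` ?K = range (frob_minus_id d) \<inter> subfield_Fq (q ^ s)"
    by (auto simp: frob_minus_id_eq_0_iff)
  also have "\<dots> = {x \<in> subfield_Fq (q ^ gcd s n). rel_trace (gcd d n) x = 0}"
    by (auto simp: range_frob_minus_id[OF assms] subfield_Fq_gcd_n[of s])
  finally show ?thesis by (simp add: card_subfield_Fq)
qed

lemma card_kernel_frob_minus_id_comp_eq:
  assumes "d > 0" and "s > 0"
  shows "card {x. frob_minus_id s (frob_minus_id d x) = 0} =
    q ^ (if multiplicity p n \<le> max (multiplicity p s) (multiplicity p d)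
         then gcd s n + gcd d n - gcd (gcd s d) n else gcd s n + gcd d n)"
proof -
  let ?g = "gcd d n" and ?h = "gcd s n"
  have g: "?g dvd n" "?g > 0" and h: "?h dvd n" "?h > 0" using assms n_pos by auto
  have "lcm ?g ?h = gcd (lcm d s) n" by (simp add: gcd_lcm_distrib gcd.commute)
  then have "p dvd n div lcm ?g ?h \<longleftrightarrow> multiplicity p (lcm d s) < multiplicity p n"
    using prime_dvd_div_gcd_iff_multiplicity_less[OF prime_p _ n_pos, of "lcm d s"] assms
    by (simp add: lcm_pos_nat)
  also have "\<dots> \<longleftrightarrow> \<not> multiplicity p n \<le> max (multiplicity p s) (multiplicity p d)"
    using assms prime_p by (simp add: multiplicity_lcm max.commute not_le)
  finally have p_dvd_iff: "p dvd n div lcm ?g ?h \<longleftrightarrow> \<not> multiplicity p n \<le> max (multiplicity p s) (multiplicity p d)" .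
  have "gcd ?g ?h = gcd (gcd s d) n" by (simp add: gcd.assoc gcd.commute gcd.left_commute)
  moreover have "gcd ?g ?h \<le> ?h" using h by simp
  ultimately show ?thesis
    using card_kernel_frob_minus_id_comp[OF assms(1), of s] card_rel_trace_kernel_subfield_Fq[OF g h] p_dvd_iff
    by (simp add: power_add[symmetric] add.commute)
qed

section \<open>The radical of the quadratic form\<close>

lemma trace_Fq_eq_rel_trace_1: "trace_Fq q n = rel_trace 1"
  by (simp add: fun_eq_iff trace_Fq_def rel_trace_def)

lemma trace_Fq_add: "trace_Fq q n ((x::'F) + y) = trace_Fq q n x + trace_Fq q n y"
  by (simp add: trace_Fq_def frobenius_add sum.distrib)

lemma trace_Fq_diff: "trace_Fq q n ((x::'F) - y) = trace_Fq q n x - trace_Fq q n y"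
  by (simp add: trace_Fq_eq_rel_trace_1 rel_trace_diff)

lemma trace_Fq_power_q_power: "trace_Fq q n ((x::'F) ^ q ^ j) = trace_Fq q n x"
  using rel_trace_power_q_power[of 1 x j] by (simp add: trace_Fq_eq_rel_trace_1)

lemma trace_Fq_nondegenerate: "(\<forall>y. trace_Fq q n (y * z) = 0) \<longleftrightarrow> (z::'F) = 0"
proof
  assume vanish: "\<forall>y. trace_Fq q n (y * z) = 0"
  have "q ^ (n - 1) < q ^ n" using q_ge_2 n_pos by (intro power_strict_increasing) auto
  then have "card {x::'F. rel_trace 1 x = 0} \<noteq> card (UNIV :: 'F set)"
    using card_rel_trace_kernel_le[of 1] card_UNIV_eq by simp
  then have "{x::'F. rel_trace 1 x = 0} \<noteq> UNIV" by metis
  then obtain w where "rel_trace 1 w \<noteq> 0" by blast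
  then have "trace_Fq q n w \<noteq> 0" by (simp add: trace_Fq_eq_rel_trace_1)
  moreover have "z \<noteq> 0 \<Longrightarrow> trace_Fq q n (w / z * z) = 0" using vanish by blast
  ultimately show "z = 0" by force
qed (metis diff_self mult_zero_right trace_Fq_diff)

lemma trace_Fq_power_q_power_mult:
  assumes "b > 0"
  shows "trace_Fq q n (y ^ q ^ b * x) = trace_Fq q n ((y::'F) * x ^ q ^ (n * b - b))"
proof -
  have "n * b - b + b = n * b + 0" using n_pos assms by (cases n) auto
  then have "(x ^ q ^ (n * b - b)) ^ q ^ b = x"
    using power_q_power_mult_n_add[of x b 0] by (simp only: power_q_power_power) simp
  then have "(y * x ^ q ^ (n * b - b)) ^ q ^ b = y ^ q ^ b * x" by (simp add: power_mult_distrib)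
  then show ?thesis by (metis trace_Fq_power_q_power)
qed

text \<open>\<open>x ^ q ^ (n * b - b)\<close> is the inverse of the \<open>b\<close>-th power of the Frobenius.\<close>

definition polar_map :: "nat \<Rightarrow> nat \<Rightarrow> 'F \<Rightarrow> 'F" where
  "polar_map a b x = x ^ q ^ b + x ^ q ^ (n * b - b) - x ^ q ^ a - x ^ q ^ (n * a - a)"

lemma trace_Fq_polarization:
  assumes "a > 0" and "b > 0"
  defines "Q \<equiv> \<lambda>x::'F. trace_Fq q n (x ^ (q ^ b + 1) - x ^ (q ^ a + 1))"
  shows "Q (x + y) - Q x - Q y = trace_Fq q n (y * polar_map a b x)"
proof -
  have expand: "(x + y) ^ (q ^ j + 1) = (x ^ q ^ j + y ^ q ^ j) * (x + y)" for j
    by (simp add: frobenius_add[symmetric])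
  have "Q (x + y) - Q x - Q y =
      trace_Fq q n (y * x ^ q ^ b - y * x ^ q ^ a) + (trace_Fq q n (y ^ q ^ b * x) - trace_Fq q n (y ^ q ^ a * x))"
    unfolding Q_def trace_Fq_diff[symmetric] trace_Fq_add[symmetric] expand
    by (simp add: algebra_simps)
  also have "\<dots> = trace_Fq q n (y * polar_map a b x)"
    unfolding trace_Fq_power_q_power_mult[OF assms(1)] trace_Fq_power_q_power_mult[OF assms(2)] polar_map_def
    by (simp add: trace_Fq_add[symmetric] trace_Fq_diff[symmetric] algebra_simps)
  finally show ?thesis .
qed

lemma qf_radical_eq_polar_map_kernel:
  assumes "a > 0" and "b > 0"
  shows "qf_radical (\<lambda>x::'F. trace_Fq q n (x ^ (q ^ b + 1) - x ^ (q ^ a + 1))) = {x. polar_map a b x = 0}"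
  unfolding qf_radical_def trace_Fq_polarization[OF assms] using trace_Fq_nondegenerate by auto

lemma polar_map_eq_0_iff:
  assumes "0 < a" and "a < b"
  shows "polar_map a b x = 0 \<longleftrightarrow> frob_minus_id (b + a) (frob_minus_id (b - a) x) = 0"
proof -
  let ?c = "n * b - b"
  have "n * b \<ge> b" "n * a \<ge> a" using n_pos by simp_all
  then have exponents: "b - a + (b + a) + ?c = n * b + b" "b + a + ?c = n * b + a"
    "b - a + ?c = n * (b - a) + (n * a - a)"
    using assms by (simp_all add: diff_mult_distrib2)
  have "(frob_minus_id (b + a) (frob_minus_id (b - a) x)) ^ q ^ ?c =
      x ^ q ^ (b - a + (b + a) + ?c) - x ^ q ^ (b + a + ?c) - (x ^ q ^ (b - a + ?c) - x ^ q ^ ?c)"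
    by (simp only: frob_minus_id_def frobenius_diff power_q_power_power)
  also have "\<dots> = polar_map a b x"
    unfolding exponents power_q_power_mult_n_add polar_map_def by (simp add: algebra_simps)
  finally have "polar_map a b x = 0 \<longleftrightarrow> (frob_minus_id (b + a) (frob_minus_id (b - a) x)) ^ q ^ ?c = 0"
    by simp
  then show ?thesis using q_ge_2 by simp
qed

lemma qf_radical_eq_frob_minus_id_kernel:
  assumes "a > 0" and "b > 0" and "a \<noteq> b"
  shows "qf_radical (\<lambda>x::'F. trace_Fq q n (x ^ (q ^ b + 1) - x ^ (q ^ a + 1))) =
    {x. frob_minus_id (b + a) (frob_minus_id (if a \<le> b then b - a else a - b) x) = 0}"
proof (cases "a < b")
  case True
  then show ?thesis using assms polar_map_eq_0_iff[of a b]
    unfolding qf_radical_eq_polar_map_kernel[OF assms(1,2)] by simp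
next
  case False
  have "polar_map a b x = - polar_map b a x" for x by (simp add: polar_map_def)
  then show ?thesis using assms False polar_map_eq_0_iff[of b a]
    unfolding qf_radical_eq_polar_map_kernel[OF assms(1,2)] by (simp add: add.commute)
qed

lemma frob_minus_id_smult:
  assumes "c \<in> subfield_Fq q"
  shows "frob_minus_id j (c * x) = c * frob_minus_id j x"
proof -
  have "c ^ q ^ j = c" using subfield_Fq_power_mult[of c 1 j] assms by simp
  then show ?thesis by (simp add: frob_minus_id_def power_mult_distrib algebra_simps)
qed

lemma subfield_subfield_Fq: "subfield (subfield_Fq q) (ring_of_type_algebra :: 'F ring)"
proof (rule subfield_ring_of_type_algebraI)
  show "- x \<in> subfield_Fq q" if "x \<in> subfield_Fq q" for x :: 'F
    using that frobenius_diff[of 0 x 1] q_ge_2 by simp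
  show "x + y \<in> subfield_Fq q" if "x \<in> subfield_Fq q" "y \<in> subfield_Fq q" for x y :: 'F
    using that frobenius_add[of x y 1] by simp
qed (simp_all add: power_mult_distrib power_inverse)

lemma subalgebra_frob_minus_id_kernel:
  "subalgebra (subfield_Fq q) {x. frob_minus_id s (frob_minus_id d x) = 0} (ring_of_type_algebra :: 'F ring)"
  by (rule subalgebra_ring_of_type_algebraI)
    (auto simp: frob_minus_id_add frob_minus_id_minus frob_minus_id_smult)

end

theorem mainTheorem5:
  fixes p k q n a b :: nat
  assumes "prime p" and "odd p" and "k \<ge> 1" and "q = p ^ k"
    and "card (UNIV :: 'F set) = q ^ n"
    and "a > 0" and "b > 0" and "a \<noteq> b" and "n > 0"
  shows "ring.dimension (ring_of_type_algebra :: 'F::{finite,field} ring)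
           (if multiplicity p n \<le> max (multiplicity p (b + a)) (multiplicity p (if a \<le> b then b - a else a - b))
            then gcd (b + a) n + gcd (if a \<le> b then b - a else a - b) n
                 - gcd (gcd (b + a) (if a \<le> b then b - a else a - b)) n
            else gcd (b + a) n + gcd (if a \<le> b then b - a else a - b) n)
           (subfield_Fq q)
           (qf_radical (\<lambda>x::'F. trace_Fq q n (x ^ (q ^ b + 1) - x ^ (q ^ a + 1))))"
proof -
  interpret Fq_extension p k q n "TYPE('F)" by unfold_locales (use assms in auto)
  define d where "d = (if a \<le> b then b - a else a - b)"
  have "d > 0" "b + a > 0" using assms by (auto simp: d_def)
  have radical: "qf_radical (\<lambda>x::'F. trace_Fq q n (x ^ (q ^ b + 1) - x ^ (q ^ a + 1))) =
      {x. frob_minus_id (b + a) (frob_minus_id d x) = 0}"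
    unfolding d_def by (rule qf_radical_eq_frob_minus_id_kernel) (use assms in auto)
  have "card (subfield_Fq q :: 'F set) = q" using card_subfield_Fq[of 1] by simp
  then show ?thesis
    unfolding radical d_def[symmetric]
    by (intro ring.dimension_of_card[OF ring_from_type_algebra subfield_subfield_Fq]
        subalgebra_frob_minus_id_kernel)
      (simp_all add: ring_of_type_algebra_def card_kernel_frob_minus_id_comp_eq[OF \<open>d > 0\<close> \<open>b + a > 0\<close>])
qed

end
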